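(* Let $\alpha,\beta>0$ and let $\lambda\in\mathbb{R}$, $a,b>0$ with $-\min\{a,b\}<\frac{\lambda}{2}<\min\{a,b\}$. Let $X,Y$ be independent random variables with $X\sim \mathrm{Be}'(\lambda,a,b;\alpha,1)$ and $Y\sim\mathrm{Be}'(-\lambda,a,b;\beta,1)$, and set $(U,V)=H_I^{+,\alpha,\beta}(X,Y)$. Then $U$ and $V$ are independent, with $U\sim\mathrm{Be}'(-\lambda,a,b;\alpha,1)$ and $V\sim \mathrm{Be}'(\lambda,a,b;\beta,1)$.
   Context: $\mathbb{R}_+=(0,\infty)$. For $\alpha,\beta>0$ the map $H_I^{+,\alpha,\beta}:\mathbb{R}_+^2\to\mathbb{R}_+^2$ is $$H_I^{+,\alpha,\beta}(x,y)=\left(\frac{y}{\alpha}\,\frac{\beta+\alpha x+\beta y+\alpha\beta xy}{1+x+y+\beta xy},\ \frac{x}{\beta}\,\frac{\alpha+\alpha x+\beta y+\alpha\beta xy}{1+x+y+\alpha xy}\right).$$ For $p,q>0$ and $\lambda,a,b\in\mathbb{R}$ with $-b<\frac{\lambda}{2}<a$, the generalized Beta prime distribution $\mathrm{Be}'(\lambda,a,b;p,q)$ is the probability distribution on $\mathbb{R}_+$ with density proportional to $x^{\lambda-1}(1+px)^{-a-\frac{\lambda}{2}}(1+qx^{-1})^{-b+\frac{\lambda}{2}}$, $x\in\mathbb{R}_+$. *)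

theory Defs
  imports "HOL-Probability.Probability"
begin

text \<open>The map H_I^{+,alpha,beta} on pairs of reals (intended domain: the open positive quadrant).\<close>
definition H_I_plus :: "real \<Rightarrow> real \<Rightarrow> real \<times> real \<Rightarrow> real \<times> real" where
  "H_I_plus \<alpha> \<beta> = (\<lambda>(x, y).
     ( (y / \<alpha>) * ((\<beta> + \<alpha> * x + \<beta> * y + \<alpha> * \<beta> * x * y) / (1 + x + y + \<beta> * x * y)),
       (x / \<beta>) * ((\<alpha> + \<alpha> * x + \<beta> * y + \<alpha> * \<beta> * x * y) / (1 + x + y + \<alpha> * x * y)) ))"

text \<open>Unnormalised density of the generalized Beta prime distribution Be'(lambda,a,b;p,q), zero off (0,infinity).\<close>
definition beta_prime_kernel :: "real \<Rightarrow> real \<Rightarrow> real \<Rightarrow> real \<Rightarrow> real \<Rightarrow> real \<Rightarrow> real" where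
  "beta_prime_kernel lam a b p q x =
     (if 0 < x then x powr (lam - 1) * (1 + p * x) powr (- a - lam / 2) * (1 + q / x) powr (- b + lam / 2)
      else 0)"

definition beta_prime_density :: "real \<Rightarrow> real \<Rightarrow> real \<Rightarrow> real \<Rightarrow> real \<Rightarrow> real \<Rightarrow> real" where
  "beta_prime_density lam a b p q x =
     beta_prime_kernel lam a b p q x / integral\<^sup>L lborel (beta_prime_kernel lam a b p q)"

end

theory Submission
  imports Defs
begin

text \<open>Write (u, v) = H(x, y). The map H is an involution of the open quadrant with Jacobian
determinant -uv/(xy), and the Beta prime kernels satisfy
  k(lam, alpha)(x) k(-lam, beta)(y) = (beta/alpha)^lam (uv/(xy)) k(-lam, alpha)(u) k(lam, beta)(v).
By the change of variables formula the joint density of (U, V) is therefore a constant multiple of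
k(-lam, alpha)(u) k(lam, beta)(v). A product density makes U and V independent, and total mass one
fixes the normalising constants of the two marginals.\<close>

section \<open>The map H_I^{+}\<close>

definition hI_denom :: "real \<Rightarrow> real \<Rightarrow> real \<Rightarrow> real" where
  "hI_denom \<beta> x y = 1 + x + y + \<beta> * x * y"

definition hI_numer :: "real \<Rightarrow> real \<Rightarrow> real \<Rightarrow> real \<Rightarrow> real" where
  "hI_numer \<alpha> \<beta> x y = \<beta> + \<alpha> * x + \<beta> * y + \<alpha> * \<beta> * x * y"

definition hI :: "real \<Rightarrow> real \<Rightarrow> real \<Rightarrow> real \<Rightarrow> real" where
  "hI \<alpha> \<beta> x y = y / \<alpha> * (hI_numer \<alpha> \<beta> x y / hI_denom \<beta> x y)"

lemma H_I_plus_eq: "H_I_plus \<alpha> \<beta> (x, y) = (hI \<alpha> \<beta> x y, hI \<beta> \<alpha> y x)"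
  unfolding H_I_plus_def hI_def hI_numer_def hI_denom_def by (simp add: ac_simps)

lemma H_I_plus_measurable [measurable]: "H_I_plus \<alpha> \<beta> \<in> borel_measurable borel"
  unfolding H_I_plus_def case_prod_beta' by (subst borel_prod[symmetric]) measurable

lemma hI_denom_pos: "\<beta> > 0 \<Longrightarrow> x > 0 \<Longrightarrow> y > 0 \<Longrightarrow> hI_denom \<beta> x y > 0"
  unfolding hI_denom_def by (simp add: add_pos_pos)

lemma hI_numer_pos: "\<alpha> > 0 \<Longrightarrow> \<beta> > 0 \<Longrightarrow> x > 0 \<Longrightarrow> y > 0 \<Longrightarrow> hI_numer \<alpha> \<beta> x y > 0"
  unfolding hI_numer_def by (simp add: add_pos_pos)

lemma hI_pos: "\<alpha> > 0 \<Longrightarrow> \<beta> > 0 \<Longrightarrow> x > 0 \<Longrightarrow> y > 0 \<Longrightarrow> hI \<alpha> \<beta> x y > 0"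
  unfolding hI_def by (simp add: hI_denom_pos hI_numer_pos)

lemma one_plus_scaled_hI:
  assumes "\<alpha> > 0" "\<beta> > 0" "x > 0" "y > 0"
  shows "1 + \<alpha> * hI \<alpha> \<beta> x y = (1 + \<beta> * y) * hI_denom \<alpha> y x / hI_denom \<beta> x y"
  using assms hI_denom_pos[of \<beta> x y]
  by (simp add: hI_def field_simps) (simp add: hI_numer_def hI_denom_def algebra_simps)

lemma one_plus_hI:
  assumes "\<alpha> > 0" "\<beta> > 0" "x > 0" "y > 0"
  shows "1 + hI \<alpha> \<beta> x y = (1 + y) * hI_numer \<beta> \<alpha> y x / (\<alpha> * hI_denom \<beta> x y)"
  using assms hI_denom_pos[of \<beta> x y]
  by (simp add: hI_def field_simps) (simp add: hI_numer_def hI_denom_def algebra_simps)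

lemma hI_involutive:
  assumes "\<alpha> > 0" "\<beta> > 0" "x > 0" "y > 0"
  shows "hI \<alpha> \<beta> (hI \<alpha> \<beta> x y) (hI \<beta> \<alpha> y x) = x"
proof -
  define u v where "u = hI \<alpha> \<beta> x y" and "v = hI \<beta> \<alpha> y x"
  define D1 D2 N1 N2 where "D1 = hI_denom \<beta> x y" and "D2 = hI_denom \<alpha> y x"
    and "N1 = hI_numer \<alpha> \<beta> x y" and "N2 = hI_numer \<beta> \<alpha> y x"
  have pos: "D1 > 0" "D2 > 0" "N1 > 0" "N2 > 0"
    using assms by (simp_all add: D1_def D2_def N1_def N2_def hI_denom_pos hI_numer_pos)
  have u: "u = y * N1 / (\<alpha> * D1)" and v: "v = x * N2 / (\<beta> * D2)"
    by (simp_all add: u_def v_def D1_def D2_def N1_def N2_def hI_def)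
  have v1: "1 + v = (1 + x) * N1 / (\<beta> * D2)" and bv1: "1 + \<beta> * v = (1 + \<alpha> * x) * D1 / D2"
    using one_plus_hI[of \<beta> \<alpha> y x] one_plus_scaled_hI[of \<beta> \<alpha> y x] assms
    by (simp_all add: v_def D1_def D2_def N1_def)
  have D2_eq: "D2 = 1 + x + y + \<alpha> * x * y" and N2_eq: "N2 = \<alpha> + \<alpha> * x + \<beta> * y + \<alpha> * \<beta> * x * y"
    by (simp_all add: D2_def N2_def hI_denom_def hI_numer_def algebra_simps)
  have numer: "hI_numer \<alpha> \<beta> u v = N1"
  proof -
    have "hI_numer \<alpha> \<beta> u v = \<beta> * (1 + v) + \<alpha> * u * (1 + \<beta> * v)"
      by (simp add: hI_numer_def algebra_simps)
    also have "\<dots> = N1 * (1 + x + y + \<alpha> * x * y) / D2"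
      unfolding v1 bv1 u using pos assms by (simp add: field_simps)
    finally show ?thesis using pos by (simp add: D2_eq)
  qed
  have denom: "hI_denom \<beta> u v = N1 * N2 / (\<alpha> * \<beta> * D2)"
  proof -
    have "hI_denom \<beta> u v = (1 + v) + u * (1 + \<beta> * v)"
      by (simp add: hI_denom_def algebra_simps)
    also have "\<dots> = N1 * (\<alpha> * (1 + x) + \<beta> * y * (1 + \<alpha> * x)) / (\<alpha> * \<beta> * D2)"
      unfolding v1 bv1 u using pos assms by (simp add: field_simps)
    finally show ?thesis by (simp add: N2_eq algebra_simps)
  qed
  have "hI \<alpha> \<beta> u v = v / \<alpha> * (N1 / (N1 * N2 / (\<alpha> * \<beta> * D2)))"
    by (simp add: hI_def numer denom)
  also have "\<dots> = x"
    using pos assms by (simp add: v field_simps)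
  finally show ?thesis by (simp add: u_def v_def)
qed

lemma H_I_plus_quadrant:
  assumes "\<alpha> > 0" "\<beta> > 0" "p \<in> {0<..} \<times> {0<..}"
  shows "H_I_plus \<alpha> \<beta> p \<in> {0<..} \<times> {0<..}" and "H_I_plus \<alpha> \<beta> (H_I_plus \<alpha> \<beta> p) = p"
  using assms hI_involutive[of \<alpha> \<beta>] hI_involutive[of \<beta> \<alpha>]
  by (auto simp: H_I_plus_eq hI_pos)

lemma bij_betw_H_I_plus_quadrant:
  assumes "\<alpha> > 0" "\<beta> > 0"
  shows "bij_betw (H_I_plus \<alpha> \<beta>) ({0<..} \<times> {0<..}) ({0<..} \<times> {0<..})"
  using H_I_plus_quadrant[OF assms]
  by (intro bij_betw_byWitness[where f' = "H_I_plus \<alpha> \<beta>"]) (blast | simp add: image_subset_iff)+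

definition hI_dx :: "real \<Rightarrow> real \<Rightarrow> real \<Rightarrow> real \<Rightarrow> real" where
  "hI_dx \<alpha> \<beta> x y = y * (1 + y) * (1 + \<beta> * y) * (\<alpha> - \<beta>) / (\<alpha> * (hI_denom \<beta> x y)\<^sup>2)"

definition hI_dy :: "real \<Rightarrow> real \<Rightarrow> real \<Rightarrow> real \<Rightarrow> real" where
  "hI_dy \<alpha> \<beta> x y =
    ((hI_numer \<alpha> \<beta> x y + \<beta> * y * (1 + \<alpha> * x)) * hI_denom \<beta> x y
      - y * hI_numer \<alpha> \<beta> x y * (1 + \<beta> * x)) / (\<alpha> * (hI_denom \<beta> x y)\<^sup>2)"

definition det2 :: "(real \<times> real \<Rightarrow> real \<times> real) \<Rightarrow> real" where
  "det2 L = fst (L (1, 0)) * snd (L (0, 1)) - fst (L (0, 1)) * snd (L (1, 0))"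

definition H_I_plus_deriv :: "real \<Rightarrow> real \<Rightarrow> real \<times> real \<Rightarrow> real \<times> real \<Rightarrow> real \<times> real" where
  "H_I_plus_deriv \<alpha> \<beta> p h =
    (hI_dx \<alpha> \<beta> (fst p) (snd p) * fst h + hI_dy \<alpha> \<beta> (fst p) (snd p) * snd h,
     hI_dy \<beta> \<alpha> (snd p) (fst p) * fst h + hI_dx \<beta> \<alpha> (snd p) (fst p) * snd h)"

lemma hI_denom_has_derivative:
  "((\<lambda>p. hI_denom \<beta> (fst p) (snd p)) has_derivative
    (\<lambda>h. (1 + \<beta> * y) * fst h + (1 + \<beta> * x) * snd h)) (at (x, y) within S)"
  unfolding hI_denom_def by (auto intro!: derivative_eq_intros simp: algebra_simps)

lemma hI_numer_has_derivative:
  "((\<lambda>p. hI_numer \<alpha> \<beta> (fst p) (snd p)) has_derivative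
    (\<lambda>h. \<alpha> * (1 + \<beta> * y) * fst h + \<beta> * (1 + \<alpha> * x) * snd h)) (at (x, y) within S)"
  unfolding hI_numer_def by (auto intro!: derivative_eq_intros simp: algebra_simps)

lemma hI_has_derivative:
  assumes "\<alpha> \<noteq> 0" "hI_denom \<beta> x y \<noteq> 0"
  shows "((\<lambda>p. hI \<alpha> \<beta> (fst p) (snd p)) has_derivative
    (\<lambda>h. hI_dx \<alpha> \<beta> x y * fst h + hI_dy \<alpha> \<beta> x y * snd h)) (at (x, y) within S)"
proof -
  have diff: "\<alpha> * hI_denom \<beta> x y - hI_numer \<alpha> \<beta> x y = (\<alpha> - \<beta>) * (1 + y)"
    by (simp add: hI_denom_def hI_numer_def algebra_simps)
  have dx: "hI_dx \<alpha> \<beta> x y = y * (1 + \<beta> * y) * (\<alpha> * hI_denom \<beta> x y - hI_numer \<alpha> \<beta> x y)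
      / (\<alpha> * (hI_denom \<beta> x y)\<^sup>2)"
    unfolding hI_dx_def diff by (simp add: algebra_simps)
  show ?thesis
    unfolding hI_def[abs_def] dx hI_dy_def using assms
    by (auto intro!: derivative_eq_intros hI_denom_has_derivative hI_numer_has_derivative
        simp: fun_eq_iff) (simp add: field_simps power2_eq_square)
qed

lemma H_I_plus_has_derivative:
  assumes "\<alpha> > 0" "\<beta> > 0" "x > 0" "y > 0"
  shows "(H_I_plus \<alpha> \<beta> has_derivative H_I_plus_deriv \<alpha> \<beta> (x, y)) (at (x, y) within S)"
proof -
  let ?swap = "\<lambda>p :: real \<times> real. (snd p, fst p)"
  have swap: "(?swap has_derivative ?swap) (at (x, y) within S)"
    by (auto intro!: derivative_eq_intros)
  have "((\<lambda>p. hI \<beta> \<alpha> (fst p) (snd p)) has_derivative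
      (\<lambda>h. hI_dx \<beta> \<alpha> y x * fst h + hI_dy \<beta> \<alpha> y x * snd h)) (at (?swap (x, y)) within ?swap ` S)"
    using assms hI_denom_pos[of \<alpha> y x] hI_has_derivative[of \<beta> \<alpha> y x] by simp
  from has_derivative_in_compose[OF swap this]
  have "((\<lambda>p. hI \<beta> \<alpha> (snd p) (fst p)) has_derivative
      (\<lambda>h. hI_dy \<beta> \<alpha> y x * fst h + hI_dx \<beta> \<alpha> y x * snd h)) (at (x, y) within S)"
    by (simp add: ac_simps)
  moreover have "H_I_plus \<alpha> \<beta> = (\<lambda>p. (hI \<alpha> \<beta> (fst p) (snd p), hI \<beta> \<alpha> (snd p) (fst p)))"
    by (simp add: fun_eq_iff H_I_plus_eq)
  ultimately show ?thesis
    using assms hI_denom_pos[of \<beta> x y] unfolding H_I_plus_deriv_def[abs_def]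
    by (auto intro!: has_derivative_Pair hI_has_derivative)
qed

lemma det2_H_I_plus_deriv:
  assumes "\<alpha> > 0" "\<beta> > 0" "x > 0" "y > 0"
  shows "det2 (H_I_plus_deriv \<alpha> \<beta> (x, y)) = - (hI \<alpha> \<beta> x y * hI \<beta> \<alpha> y x / (x * y))"
proof -
  define D1 D2 N1 N2 where "D1 = hI_denom \<beta> x y" and "D2 = hI_denom \<alpha> y x"
    and "N1 = hI_numer \<alpha> \<beta> x y" and "N2 = hI_numer \<beta> \<alpha> y x"
  have pos: "D1 > 0" "D2 > 0"
    using assms by (simp_all add: D1_def D2_def hI_denom_pos)
  have poly: "(y * (1 + y) * (1 + \<beta> * y) * (\<alpha> - \<beta>)) * (x * (1 + x) * (1 + \<alpha> * x) * (\<beta> - \<alpha>))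
     - ((N1 + \<beta> * y * (1 + \<alpha> * x)) * D1 - y * N1 * (1 + \<beta> * x))
       * ((N2 + \<alpha> * x * (1 + \<beta> * y)) * D2 - x * N2 * (1 + \<alpha> * y))
     = - (N1 * N2 * D1 * D2)"
    unfolding D1_def D2_def N1_def N2_def hI_denom_def hI_numer_def by (simp add: algebra_simps)
  have "det2 (H_I_plus_deriv \<alpha> \<beta> (x, y))
      = hI_dx \<alpha> \<beta> x y * hI_dx \<beta> \<alpha> y x - hI_dy \<alpha> \<beta> x y * hI_dy \<beta> \<alpha> y x"
    by (simp add: det2_def H_I_plus_deriv_def)
  also have "\<dots>
     = ((y * (1 + y) * (1 + \<beta> * y) * (\<alpha> - \<beta>)) * (x * (1 + x) * (1 + \<alpha> * x) * (\<beta> - \<alpha>))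
     - ((N1 + \<beta> * y * (1 + \<alpha> * x)) * D1 - y * N1 * (1 + \<beta> * x))
       * ((N2 + \<alpha> * x * (1 + \<beta> * y)) * D2 - x * N2 * (1 + \<alpha> * y)))
     / ((\<alpha> * D1\<^sup>2) * (\<beta> * D2\<^sup>2))"
    unfolding hI_dx_def hI_dy_def D1_def[symmetric] D2_def[symmetric] N1_def[symmetric] N2_def[symmetric]
    by (simp only: times_divide_times_eq diff_divide_distrib[symmetric])
  also have "\<dots> = - (hI \<alpha> \<beta> x y * hI \<beta> \<alpha> y x / (x * y))"
    unfolding poly hI_def D1_def[symmetric] D2_def[symmetric] N1_def[symmetric] N2_def[symmetric]
    using pos assms by (simp add: field_simps power2_eq_square)
  finally show ?thesis .
qed

section \<open>Beta prime kernels\<close>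

lemma beta_prime_kernel_measurable [measurable]:
  "beta_prime_kernel lam a b p q \<in> borel_measurable borel"
  unfolding beta_prime_kernel_def[abs_def] by measurable

lemma beta_prime_kernel_nonneg: "beta_prime_kernel lam a b p q x \<ge> 0"
  by (simp add: beta_prime_kernel_def)

lemma beta_prime_density_nonneg: "beta_prime_density lam a b p q x \<ge> 0"
  by (simp add: beta_prime_density_def beta_prime_kernel_nonneg integral_nonneg_AE)

lemma beta_prime_kernel_pos_eq:
  assumes "x > 0"
  shows "beta_prime_kernel lam a b p 1 x =
    x powr (lam / 2 + b - 1) * (1 + p * x) powr (- a - lam / 2) * (1 + x) powr (- b + lam / 2)"
proof -
  have "1 + 1 / x = (1 + x) / x" using assms by (simp add: field_simps)
  then have "beta_prime_kernel lam a b p 1 x = x powr (lam - 1) * (1 + p * x) powr (- a - lam / 2)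
      * ((1 + x) powr (- b + lam / 2) / x powr (- b + lam / 2))"
    using assms by (simp add: beta_prime_kernel_def powr_divide)
  also have "\<dots> = x powr (lam - 1) / x powr (- b + lam / 2)
      * (1 + p * x) powr (- a - lam / 2) * (1 + x) powr (- b + lam / 2)"
    by simp
  also have "x powr (lam - 1) / x powr (- b + lam / 2) = x powr (lam / 2 + b - 1)"
    unfolding powr_diff[symmetric] by (simp add: algebra_simps)
  finally show ?thesis .
qed

lemma beta_prime_kernel_pos:
  assumes "x > 0" "p \<ge> 0"
  shows "beta_prime_kernel lam a b p 1 x > 0"
proof -
  have "1 + p * x > 0" using assms by (simp add: add_pos_nonneg)
  then show ?thesis using assms by (simp add: beta_prime_kernel_pos_eq)
qed

lemma ln_beta_prime_kernel:
  assumes "x > 0" "p \<ge> 0"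
  shows "ln (beta_prime_kernel lam a b p 1 x) =
    (lam / 2 + b - 1) * ln x + (- a - lam / 2) * ln (1 + p * x) + (- b + lam / 2) * ln (1 + x)"
proof -
  have "1 + p * x > 0" using assms by (simp add: add_pos_nonneg)
  then show ?thesis using assms by (simp add: beta_prime_kernel_pos_eq ln_mult ln_powr)
qed

lemma beta_prime_kernel_H_I_plus:
  assumes "\<alpha> > 0" "\<beta> > 0" "x > 0" "y > 0"
  defines "u \<equiv> hI \<alpha> \<beta> x y" and "v \<equiv> hI \<beta> \<alpha> y x"
  shows "beta_prime_kernel lam a b \<alpha> 1 x * beta_prime_kernel (- lam) a b \<beta> 1 y =
    (\<beta> / \<alpha>) powr lam * (u * v / (x * y)) *
    (beta_prime_kernel (- lam) a b \<alpha> 1 u * beta_prime_kernel lam a b \<beta> 1 v)"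
proof -
  define D1 D2 N1 N2 where "D1 = hI_denom \<beta> x y" and "D2 = hI_denom \<alpha> y x"
    and "N1 = hI_numer \<alpha> \<beta> x y" and "N2 = hI_numer \<beta> \<alpha> y x"
  have pos: "D1 > 0" "D2 > 0" "N1 > 0" "N2 > 0" "u > 0" "v > 0"
    using assms(1-4) by (simp_all add: u_def v_def D1_def D2_def N1_def N2_def hI_denom_pos hI_numer_pos hI_pos)
  have ln_u: "ln u = ln y + ln N1 - ln \<alpha> - ln D1"
    and ln_v: "ln v = ln x + ln N2 - ln \<beta> - ln D2"
    using pos assms(1-4) by (simp_all add: u_def v_def D1_def D2_def N1_def N2_def hI_def ln_mult ln_div)
  have ln_au: "ln (1 + \<alpha> * u) = ln (1 + \<beta> * y) + ln D2 - ln D1"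
    and ln_bv: "ln (1 + \<beta> * v) = ln (1 + \<alpha> * x) + ln D1 - ln D2"
    using one_plus_scaled_hI[of \<alpha> \<beta> x y] one_plus_scaled_hI[of \<beta> \<alpha> y x] pos assms(1-4)
      add_pos_pos[of 1 "\<alpha> * x"] add_pos_pos[of 1 "\<beta> * y"]
    by (simp_all add: u_def v_def D1_def D2_def ln_mult ln_div)
  have ln_1u: "ln (1 + u) = ln (1 + y) + ln N2 - ln \<alpha> - ln D1"
    and ln_1v: "ln (1 + v) = ln (1 + x) + ln N1 - ln \<beta> - ln D2"
    using one_plus_hI[of \<alpha> \<beta> x y] one_plus_hI[of \<beta> \<alpha> y x] pos assms(1-4)
    by (simp_all add: u_def v_def D1_def D2_def N1_def N2_def ln_mult ln_div add_pos_pos)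
  have kernel_pos: "beta_prime_kernel (- lam) a b \<alpha> 1 u > 0" "beta_prime_kernel lam a b \<beta> 1 v > 0"
    "beta_prime_kernel lam a b \<alpha> 1 x > 0" "beta_prime_kernel (- lam) a b \<beta> 1 y > 0"
    using pos assms(1-4) by (simp_all add: beta_prime_kernel_pos)
  \<comment> \<open>In logarithms both sides become linear combinations of ln x, ln y, ln (1 + x), ln (1 + y),
    ln (1 + \<alpha> x), ln (1 + \<beta> y), ln D1, ln D2, ln N1, ln N2, ln \<alpha>, ln \<beta>.\<close>
  have "ln ((\<beta> / \<alpha>) powr lam * (u * v / (x * y)) *
      (beta_prime_kernel (- lam) a b \<alpha> 1 u * beta_prime_kernel lam a b \<beta> 1 v))
    = lam * (ln \<beta> - ln \<alpha>) + (ln u + ln v - ln x - ln y)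
      + ln (beta_prime_kernel (- lam) a b \<alpha> 1 u) + ln (beta_prime_kernel lam a b \<beta> 1 v)"
    using pos assms(1-4) kernel_pos by (simp add: ln_mult ln_div ln_powr)
  also have "\<dots> = ln (beta_prime_kernel lam a b \<alpha> 1 x) + ln (beta_prime_kernel (- lam) a b \<beta> 1 y)"
    using pos assms(1-4)
    by (simp add: ln_beta_prime_kernel ln_u ln_v ln_au ln_bv ln_1u ln_1v field_simps)
  also have "\<dots> = ln (beta_prime_kernel lam a b \<alpha> 1 x * beta_prime_kernel (- lam) a b \<beta> 1 y)"
    using kernel_pos by (simp add: ln_mult)
  finally show ?thesis
    using pos assms(1-4) kernel_pos by simp
qed

section \<open>Change of variables in the plane\<close>

lemma nn_integral_indicator_lborel_eq:
  fixes h :: "'a::euclidean_space \<Rightarrow> real"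
  assumes h_meas: "(\<lambda>x. indicator T x * h x) \<in> borel_measurable borel" and h_nonneg: "\<And>x. 0 \<le> h x"
  shows "(\<integral>\<^sup>+x. ennreal (indicator T x * h x) \<partial>lborel) =
    (if h absolutely_integrable_on T then ennreal (integral T h) else \<infinity>)"
proof (cases "h absolutely_integrable_on T")
  case True
  then have "(h has_integral integral T h) T"
    by (simp add: absolutely_integrable_on_def has_integral_integral)
  then show ?thesis
    using True h_nonneg by (simp add: nn_integral_has_integral_lebesgue)
next
  case False
  have "(\<integral>\<^sup>+x. ennreal (indicator T x * h x) \<partial>lborel) = \<infinity>"
  proof (rule ccontr)
    assume "(\<integral>\<^sup>+x. ennreal (indicator T x * h x) \<partial>lborel) \<noteq> \<infinity>"
    then have "integrable lborel (\<lambda>x. indicator T x * h x)"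
      using h_meas h_nonneg by (intro integrableI_bounded) (auto simp: abs_mult top.not_eq_extremum)
    then have "h absolutely_integrable_on T"
      using h_meas by (simp add: integrable_completion set_integrable_def)
    with False show False by simp
  qed
  with False show ?thesis by simp
qed

lemma nn_integral_lborel_change_of_variables:
  fixes f :: "real^'n::{finite,wellorder} \<Rightarrow> real" and g :: "real^'n::_ \<Rightarrow> real^'n::_"
  assumes S: "S \<in> sets lebesgue"
    and der: "\<And>x. x \<in> S \<Longrightarrow> (g has_derivative g' x) (at x within S)"
    and inj: "inj_on g S"
    and f_nonneg: "\<And>x. 0 \<le> f x"
    and f_meas: "(\<lambda>x. indicator (g ` S) x * f x) \<in> borel_measurable borel"
    and F_meas: "(\<lambda>x. indicator S x * (\<bar>det (matrix (g' x))\<bar> * f (g x))) \<in> borel_measurable borel"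
  shows "(\<integral>\<^sup>+x. ennreal (indicator (g ` S) x * f x) \<partial>lborel)
       = (\<integral>\<^sup>+x. ennreal (indicator S x * (\<bar>det (matrix (g' x))\<bar> * f (g x))) \<partial>lborel)"
proof -
  define F where "F x = \<bar>det (matrix (g' x))\<bar> * f (g x)" for x
  have F_nonneg: "0 \<le> F x" for x using f_nonneg by (simp add: F_def)
  have cv: "(\<lambda>x. \<bar>det (matrix (g' x))\<bar> *\<^sub>R vec (f (g x)) :: real^1) absolutely_integrable_on S \<and>
           integral S (\<lambda>x. \<bar>det (matrix (g' x))\<bar> *\<^sub>R vec (f (g x)) :: real^1) = b
     \<longleftrightarrow> (\<lambda>x. vec (f x) :: real^1) absolutely_integrable_on (g ` S) \<and> integral (g ` S) (\<lambda>x. vec (f x) :: real^1) = b" for b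
    by (rule has_absolute_integral_change_of_variables[OF S der inj])
  have iff: "F absolutely_integrable_on S \<and> integral S F = c \<longleftrightarrow>
      f absolutely_integrable_on (g ` S) \<and> integral (g ` S) f = c" for c
    using cv[of "vec c"] unfolding absolutely_integrable_on_1_iff integral_on_1_eq
    by (simp add: F_def[abs_def] vec_eq_iff)
  have "F absolutely_integrable_on S \<longleftrightarrow> f absolutely_integrable_on (g ` S)"
    and "f absolutely_integrable_on (g ` S) \<Longrightarrow> integral S F = integral (g ` S) f"
    using iff by blast+
  then show ?thesis
    using nn_integral_indicator_lborel_eq[OF f_meas f_nonneg] nn_integral_indicator_lborel_eq[of S F]
      F_meas F_nonneg
    by (simp add: F_def[symmetric])
qed

text \<open>The change of variables theorem of HOL-Analysis is stated for vectors of type real^'n;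
  pair_of_vec2 and vec2_of_pair transport it to the plane real \<times> real.\<close>

definition pair_of_vec2 :: "real^2 \<Rightarrow> real \<times> real" where
  "pair_of_vec2 z = (z $ 1, z $ 2)"

definition vec2_of_pair :: "real \<times> real \<Rightarrow> real^2" where
  "vec2_of_pair p = vector [fst p, snd p]"

lemma pair_of_vec2_of_pair [simp]: "pair_of_vec2 (vec2_of_pair p) = p"
  by (simp add: pair_of_vec2_def vec2_of_pair_def)

lemma vec2_of_pair_of_vec2 [simp]: "vec2_of_pair (pair_of_vec2 z) = z"
  by (simp add: pair_of_vec2_def vec2_of_pair_def vec_eq_iff forall_2)

lemma bounded_linear_pair_of_vec2: "bounded_linear pair_of_vec2"
  unfolding pair_of_vec2_def by (intro bounded_linear_Pair bounded_linear_vec_nth)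

lemma bounded_linear_vec2_of_pair: "bounded_linear vec2_of_pair"
proof -
  have "linear vec2_of_pair"
    by (rule linearI) (auto simp: vec2_of_pair_def vec_eq_iff forall_2)
  then show ?thesis by (simp add: linear_conv_bounded_linear)
qed

lemma pair_of_vec2_measurable [measurable]: "pair_of_vec2 \<in> borel_measurable borel"
  using bounded_linear_pair_of_vec2 by (intro borel_measurable_continuous_onI linear_continuous_on)

lemma distr_lborel_pair_of_vec2: "distr lborel borel pair_of_vec2 = lborel"
proof (rule lborel_eqI[symmetric])
  fix l u :: "real \<times> real"
  assume le_Basis: "\<And>b. b \<in> Basis \<Longrightarrow> l \<bullet> b \<le> u \<bullet> b"
  have le: "fst l \<le> fst u" "snd l \<le> snd u"
    using le_Basis[of "(1, 0)"] le_Basis[of "(0, 1)"] by (auto simp: Basis_prod_def inner_prod_def)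
  have Basis_vec2: "(Basis :: (real^2) set) = {axis 1 1, axis 2 1}"
    by (auto simp: Basis_vec_def UNIV_2)
  have "p \<in> box l u \<longleftrightarrow> fst l < fst p \<and> fst p < fst u \<and> snd l < snd p \<and> snd p < snd u" for p
    by (auto simp: mem_box Basis_prod_def inner_prod_def)
  then have "pair_of_vec2 -` box l u = box (vec2_of_pair l) (vec2_of_pair u)"
    by (auto simp: pair_of_vec2_def vec2_of_pair_def mem_box_cart forall_2)
  then have "emeasure (distr lborel borel pair_of_vec2) (box l u) = ennreal ((fst u - fst l) * (snd u - snd l))"
    using le by (simp add: emeasure_distr emeasure_lborel_box_eq Basis_vec2 axis_eq_axis inner_axis
        vec2_of_pair_def cart_eq_inner_axis[symmetric])
  then show "emeasure (distr lborel borel pair_of_vec2) (box l u) = (\<Prod>b\<in>Basis. (u - l) \<bullet> b)"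
    by (simp add: Basis_prod_def inner_prod_def mult.commute)
qed simp

lemma nn_integral_lborel_pair_of_vec2:
  "h \<in> borel_measurable borel \<Longrightarrow>
    (\<integral>\<^sup>+p. ennreal (h p) \<partial>lborel) = (\<integral>\<^sup>+z. ennreal (h (pair_of_vec2 z)) \<partial>lborel)"
  by (subst distr_lborel_pair_of_vec2[symmetric]) (simp add: nn_integral_distr)

lemma has_derivative_vec2_of_pair_conj:
  assumes "(G has_derivative G') (at (pair_of_vec2 z) within S)"
  shows "((\<lambda>z. vec2_of_pair (G (pair_of_vec2 z))) has_derivative
    (\<lambda>h. vec2_of_pair (G' (pair_of_vec2 h)))) (at z within pair_of_vec2 -` S)"
proof -
  have "(pair_of_vec2 has_derivative pair_of_vec2) (at z within pair_of_vec2 -` S)"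
    by (rule bounded_linear_imp_has_derivative[OF bounded_linear_pair_of_vec2])
  moreover have "(G has_derivative G') (at (pair_of_vec2 z) within pair_of_vec2 ` pair_of_vec2 -` S)"
    using assms by (rule has_derivative_subset) auto
  ultimately have "((\<lambda>z. G (pair_of_vec2 z)) has_derivative (\<lambda>h. G' (pair_of_vec2 h)))
      (at z within pair_of_vec2 -` S)"
    by (rule has_derivative_in_compose)
  then show ?thesis
    by (rule has_derivative_compose)
      (rule bounded_linear_imp_has_derivative[OF bounded_linear_vec2_of_pair])
qed

lemma det_matrix_vec2_of_pair_conj:
  "det (matrix (\<lambda>h. vec2_of_pair (L (pair_of_vec2 h)))) = det2 L"
proof -
  have "pair_of_vec2 (axis 1 1) = (1, 0)" "pair_of_vec2 (axis 2 1) = (0, 1)"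
    by (simp_all add: pair_of_vec2_def axis_def)
  then show ?thesis
    by (simp add: det_2 matrix_def det2_def vec2_of_pair_def)
qed

lemma nn_integral_lborel_pair_change_of_variables:
  fixes G :: "real \<times> real \<Rightarrow> real \<times> real" and f :: "real \<times> real \<Rightarrow> real"
  assumes S: "S \<in> sets borel"
    and der: "\<And>p. p \<in> S \<Longrightarrow> (G has_derivative G' p) (at p within S)"
    and inj: "inj_on G S"
    and f_nonneg: "\<And>p. 0 \<le> f p"
    and f_meas: "(\<lambda>p. indicator (G ` S) p * f p) \<in> borel_measurable borel"
    and F_meas: "(\<lambda>p. indicator S p * (\<bar>det2 (G' p)\<bar> * f (G p))) \<in> borel_measurable borel"
  shows "(\<integral>\<^sup>+p. ennreal (indicator (G ` S) p * f p) \<partial>lborel)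
       = (\<integral>\<^sup>+p. ennreal (indicator S p * (\<bar>det2 (G' p)\<bar> * f (G p))) \<partial>lborel)"
proof -
  define S2 where "S2 = pair_of_vec2 -` S"
  define g where "g z = vec2_of_pair (G (pair_of_vec2 z))" for z
  define g' where "g' z = (\<lambda>h. vec2_of_pair (G' (pair_of_vec2 z) (pair_of_vec2 h)))" for z
  have "S2 \<in> sets borel"
    unfolding S2_def using measurable_sets[OF pair_of_vec2_measurable S] by simp
  then have S2: "S2 \<in> sets lebesgue"
    by (simp add: sets_completionI_sets)
  have der2: "(g has_derivative g' z) (at z within S2)" if "z \<in> S2" for z
    using that der[of "pair_of_vec2 z"] unfolding g_def[abs_def] g'_def S2_def
    by (intro has_derivative_vec2_of_pair_conj) auto
  have inj2: "inj_on g S2"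
    using inj unfolding inj_on_def g_def S2_def
    by (metis pair_of_vec2_of_pair vec2_of_pair_of_vec2 vimageE)
  have det: "det (matrix (g' z)) = det2 (G' (pair_of_vec2 z))" for z
    unfolding g'_def by (rule det_matrix_vec2_of_pair_conj)
  have image_g: "z \<in> g ` S2 \<longleftrightarrow> pair_of_vec2 z \<in> G ` S" for z
    unfolding g_def S2_def image_iff
    by (metis pair_of_vec2_of_pair vec2_of_pair_of_vec2 vimageE vimageI)
  have F_eq: "indicator S2 z * (\<bar>det (matrix (g' z))\<bar> * f (pair_of_vec2 (g z))) =
      indicator S (pair_of_vec2 z) * (\<bar>det2 (G' (pair_of_vec2 z))\<bar> * f (G (pair_of_vec2 z)))" for z
    by (simp add: det g_def S2_def indicator_def)
  have f_eq: "indicator (g ` S2) z * f (pair_of_vec2 z) = indicator (G ` S) (pair_of_vec2 z) * f (pair_of_vec2 z)" for z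
    by (simp add: image_g indicator_def)
  have "(\<integral>\<^sup>+p. ennreal (indicator (G ` S) p * f p) \<partial>lborel)
      = (\<integral>\<^sup>+z. ennreal (indicator (g ` S2) z * f (pair_of_vec2 z)) \<partial>lborel)"
    using f_meas by (simp add: nn_integral_lborel_pair_of_vec2 f_eq)
  also have "\<dots> = (\<integral>\<^sup>+z. ennreal (indicator S2 z * (\<bar>det (matrix (g' z))\<bar> * f (pair_of_vec2 (g z)))) \<partial>lborel)"
    using measurable_compose[OF pair_of_vec2_measurable f_meas] measurable_compose[OF pair_of_vec2_measurable F_meas]
    by (intro nn_integral_lborel_change_of_variables[OF S2 der2 inj2 f_nonneg])
      (simp_all add: f_eq F_eq o_def)
  also have "\<dots> = (\<integral>\<^sup>+p. ennreal (indicator S p * (\<bar>det2 (G' p)\<bar> * f (G p))) \<partial>lborel)"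
    using F_meas by (simp add: nn_integral_lborel_pair_of_vec2 F_eq)
  finally show ?thesis .
qed

lemma distr_density_lborel_pair_change_of_variables:
  fixes G :: "real \<times> real \<Rightarrow> real \<times> real" and f g :: "real \<times> real \<Rightarrow> real"
  assumes S: "S \<in> sets borel" and G_meas: "G \<in> borel_measurable borel"
    and der: "\<And>p. p \<in> S \<Longrightarrow> (G has_derivative G' p) (at p within S)"
    and inj: "inj_on G S" and image: "G ` S = T"
    and f_eq: "\<And>p. p \<in> S \<Longrightarrow> f p = \<bar>det2 (G' p)\<bar> * g (G p)"
    and f_outside: "\<And>p. p \<notin> S \<Longrightarrow> f p = 0" and g_outside: "\<And>q. q \<notin> T \<Longrightarrow> g q = 0"
    and g_nonneg: "\<And>q. 0 \<le> g q"
    and f_meas: "f \<in> borel_measurable borel" and g_meas: "g \<in> borel_measurable borel"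
  shows "distr (density lborel (\<lambda>p. ennreal (f p))) lborel G = density lborel (\<lambda>q. ennreal (g q))"
proof (rule measure_eqI)
  fix A assume "A \<in> sets (distr (density lborel (\<lambda>p. ennreal (f p))) lborel G)"
  then have A[measurable]: "A \<in> sets borel" by simp
  define gA where "gA q = g q * indicator A q" for q
  have "G -` A \<in> sets borel"
    using measurable_sets[OF G_meas A] by simp
  then have "emeasure (distr (density lborel (\<lambda>p. ennreal (f p))) lborel G) A
      = (\<integral>\<^sup>+p. ennreal (f p) * indicator (G -` A) p \<partial>lborel)"
    using G_meas f_meas by (simp add: emeasure_distr emeasure_density)
  also have "\<dots> = (\<integral>\<^sup>+p. ennreal (indicator S p * (\<bar>det2 (G' p)\<bar> * gA (G p))) \<partial>lborel)"
    by (intro nn_integral_cong) (auto simp: gA_def f_eq f_outside indicator_def)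
  also have "\<dots> = (\<integral>\<^sup>+q. ennreal (indicator (G ` S) q * gA q) \<partial>lborel)"
  proof (rule nn_integral_lborel_pair_change_of_variables[symmetric, OF S der inj])
    have "(\<lambda>p. indicator S p * (\<bar>det2 (G' p)\<bar> * gA (G p))) = (\<lambda>p. f p * indicator A (G p))"
      by (auto simp: fun_eq_iff gA_def f_eq f_outside indicator_def)
    then show "(\<lambda>p. indicator S p * (\<bar>det2 (G' p)\<bar> * gA (G p))) \<in> borel_measurable borel"
      using G_meas f_meas by simp
    have "(\<lambda>q. indicator (G ` S) q * gA q) = gA"
      by (auto simp: fun_eq_iff gA_def image g_outside indicator_def)
    moreover have "gA \<in> borel_measurable borel"
      using g_meas unfolding gA_def[abs_def] by measurable
    ultimately show "(\<lambda>q. indicator (G ` S) q * gA q) \<in> borel_measurable borel"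
      by simp
  qed (simp_all add: gA_def g_nonneg)
  also have "\<dots> = (\<integral>\<^sup>+q. ennreal (g q) * indicator A q \<partial>lborel)"
    by (intro nn_integral_cong) (auto simp: gA_def image g_outside indicator_def)
  also have "\<dots> = emeasure (density lborel (\<lambda>q. ennreal (g q))) A"
    using g_meas by (simp add: emeasure_density)
  finally show "emeasure (distr (density lborel (\<lambda>p. ennreal (f p))) lborel G) A
      = emeasure (density lborel (\<lambda>q. ennreal (g q))) A" .
qed simp

lemma distr_H_I_plus_beta_prime_product:
  assumes "\<alpha> > 0" "\<beta> > 0" "d \<ge> 0"
  shows "distr (density lborel (\<lambda>p. ennreal (d * beta_prime_kernel lam a b \<alpha> 1 (fst p)
           * beta_prime_kernel (- lam) a b \<beta> 1 (snd p)))) lborel (H_I_plus \<alpha> \<beta>)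
    = density lborel (\<lambda>q. ennreal (d * (\<beta> / \<alpha>) powr lam * beta_prime_kernel (- lam) a b \<alpha> 1 (fst q)
           * beta_prime_kernel lam a b \<beta> 1 (snd q)))"
proof (rule distr_density_lborel_pair_change_of_variables)
  let ?Q = "{0<..} \<times> {0<..} :: (real \<times> real) set"
  let ?H = "H_I_plus \<alpha> \<beta>"
  show "?Q \<in> sets borel"
    by (simp add: borel_open open_Times)
  show "?H ` ?Q = ?Q" and "inj_on ?H ?Q"
    using bij_betw_H_I_plus_quadrant[OF assms(1,2)] by (simp_all add: bij_betw_def)
  show "(?H has_derivative H_I_plus_deriv \<alpha> \<beta> p) (at p within ?Q)" if "p \<in> ?Q" for p
    using that H_I_plus_has_derivative[OF assms(1,2), of "fst p" "snd p"] by auto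
  show "d * beta_prime_kernel lam a b \<alpha> 1 (fst p) * beta_prime_kernel (- lam) a b \<beta> 1 (snd p)
      = \<bar>det2 (H_I_plus_deriv \<alpha> \<beta> p)\<bar>
        * (d * (\<beta> / \<alpha>) powr lam * beta_prime_kernel (- lam) a b \<alpha> 1 (fst (?H p))
           * beta_prime_kernel lam a b \<beta> 1 (snd (?H p)))" if pQ: "p \<in> ?Q" for p
  proof -
    obtain x y where p: "p = (x, y)" "x > 0" "y > 0" using pQ by (cases p) auto
    then have "\<bar>det2 (H_I_plus_deriv \<alpha> \<beta> p)\<bar> = hI \<alpha> \<beta> x y * hI \<beta> \<alpha> y x / (x * y)"
      using det2_H_I_plus_deriv[OF assms(1,2) p(2,3)] hI_pos[of \<alpha> \<beta> x y] hI_pos[of \<beta> \<alpha> y x] assms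
      by simp
    moreover have "d * beta_prime_kernel lam a b \<alpha> 1 x * beta_prime_kernel (- lam) a b \<beta> 1 y
        = d * ((\<beta> / \<alpha>) powr lam * (hI \<alpha> \<beta> x y * hI \<beta> \<alpha> y x / (x * y))
          * (beta_prime_kernel (- lam) a b \<alpha> 1 (hI \<alpha> \<beta> x y) * beta_prime_kernel lam a b \<beta> 1 (hI \<beta> \<alpha> y x)))"
      using beta_prime_kernel_H_I_plus[OF assms(1,2) p(2,3), of lam a b]
      by (simp only: mult.assoc)
    ultimately show ?thesis
      by (simp add: p(1) H_I_plus_eq ac_simps)
  qed
next
  fix p :: "real \<times> real" assume "p \<notin> {0<..} \<times> {0<..}"
  then have "fst p \<le> 0 \<or> snd p \<le> 0" by (cases p) auto
  then show "d * beta_prime_kernel lam a b \<alpha> 1 (fst p) * beta_prime_kernel (- lam) a b \<beta> 1 (snd p) = 0"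
    and "d * (\<beta> / \<alpha>) powr lam * beta_prime_kernel (- lam) a b \<alpha> 1 (fst p)
      * beta_prime_kernel lam a b \<beta> 1 (snd p) = 0"
    by (auto simp: beta_prime_kernel_def)
next
  fix q :: "real \<times> real"
  show "0 \<le> d * (\<beta> / \<alpha>) powr lam * beta_prime_kernel (- lam) a b \<alpha> 1 (fst q)
      * beta_prime_kernel lam a b \<beta> 1 (snd q)"
    using assms by (simp add: beta_prime_kernel_nonneg)
qed (subst borel_prod[symmetric], measurable)+

section \<open>Independence from a product density\<close>

lemma distributed_compose_distr_density:
  assumes Z: "distributed M N Z f" and push: "distr (density N f) K H = density K g"
    and H: "H \<in> measurable N K" and g: "g \<in> borel_measurable K"
  shows "distributed M K (\<lambda>\<omega>. H (Z \<omega>)) g"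
proof -
  have Z_meas: "Z \<in> measurable M N"
    using Z by (rule distributed_measurable)
  have "distr M K (\<lambda>\<omega>. H (Z \<omega>)) = distr (distr M N Z) K H"
    using distr_distr[OF H Z_meas] by (simp add: o_def)
  then show ?thesis
    using Z H g push measurable_compose[OF Z_meas H]
    by (simp add: distributed_def)
qed

lemma (in prob_space) indep_var_lborel_iff:
  "indep_var lborel X lborel Y \<longleftrightarrow> indep_var borel X borel Y"
  unfolding indep_var_def indep_vars_def by (simp add: case_bool_if cong: if_cong)

lemma (in prob_space) distributed_pair_of_indep_var:
  fixes X Y :: "'a \<Rightarrow> real"
  assumes "indep_var borel X borel Y"
    and "distributed M lborel X (\<lambda>x. ennreal (f x))" and "distributed M lborel Y (\<lambda>y. ennreal (g y))"
    and "\<And>x. f x \<ge> 0" and "\<And>y. g y \<ge> 0"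
  shows "distributed M lborel (\<lambda>\<omega>. (X \<omega>, Y \<omega>)) (\<lambda>p. ennreal (f (fst p) * g (snd p)))"
  using distributed_joint_indep[OF lborel.sigma_finite_measure_axioms lborel.sigma_finite_measure_axioms
      assms(2,3)] assms(1,4,5)
  by (simp add: indep_var_lborel_iff lborel_prod case_prod_beta' ennreal_mult)

lemma nn_integral_normalized_density:
  fixes h :: "'a \<Rightarrow> real"
  assumes "h \<in> borel_measurable N" and "(\<integral>\<^sup>+x. ennreal (h x) \<partial>N) = ennreal r"
    and "r > 0" and "\<And>x. h x \<ge> 0"
  shows "(\<integral>\<^sup>+x. ennreal (h x / r) \<partial>N) = 1"
proof -
  have "(\<integral>\<^sup>+x. ennreal (h x / r) \<partial>N) = (\<integral>\<^sup>+x. ennreal (h x) * ennreal (1 / r) \<partial>N)"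
    using assms by (intro nn_integral_cong) (simp add: ennreal_mult[symmetric])
  also have "\<dots> = 1"
    using assms by (subst nn_integral_multc) (simp_all add: ennreal_mult[symmetric])
  finally show ?thesis .
qed

lemma product_density_normalization:
  fixes f g :: "real \<Rightarrow> real"
  assumes f_meas [measurable]: "f \<in> borel_measurable borel" and g_meas [measurable]: "g \<in> borel_measurable borel"
    and nonneg: "c \<ge> 0" "\<And>x. f x \<ge> 0" "\<And>y. g y \<ge> 0"
    and one: "(\<integral>\<^sup>+p. ennreal (c * f (fst p) * g (snd p)) \<partial>lborel) = 1"
  shows "c * integral\<^sup>L lborel f * integral\<^sup>L lborel g = 1"
    and "(\<integral>\<^sup>+x. ennreal (f x) \<partial>lborel) = ennreal (integral\<^sup>L lborel f)"
    and "(\<integral>\<^sup>+y. ennreal (g y) \<partial>lborel) = ennreal (integral\<^sup>L lborel g)"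
proof -
  define Kf Kg where "Kf = (\<integral>\<^sup>+x. ennreal (f x) \<partial>lborel)" and "Kg = (\<integral>\<^sup>+y. ennreal (g y) \<partial>lborel)"
  have "(\<integral>\<^sup>+p. ennreal (c * f (fst p) * g (snd p)) \<partial>lborel)
      = (\<integral>\<^sup>+x. \<integral>\<^sup>+y. ennreal c * ennreal (f x) * ennreal (g y) \<partial>lborel \<partial>lborel)"
    using nonneg by (subst lborel_prod[symmetric], subst lborel.nn_integral_fst[symmetric])
      (simp_all add: ennreal_mult case_prod_beta')
  also have "\<dots> = ennreal c * Kf * Kg"
    by (simp add: Kf_def Kg_def nn_integral_cmult nn_integral_multc)
  finally have prod_one: "ennreal c * Kf * Kg = 1"
    using one by simp
  then have "ennreal c \<noteq> 0" "Kf \<noteq> 0" "Kg \<noteq> 0"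
    by auto
  then have "Kf \<noteq> \<top>" "Kg \<noteq> \<top>"
    using prod_one by (auto simp: ennreal_mult_top ennreal_top_mult)
  then have Kf: "Kf = ennreal (integral\<^sup>L lborel f)" and Kg: "Kg = ennreal (integral\<^sup>L lborel g)"
    using nonneg by (simp_all add: Kf_def Kg_def integral_eq_nn_integral less_top)
  then show "(\<integral>\<^sup>+x. ennreal (f x) \<partial>lborel) = ennreal (integral\<^sup>L lborel f)"
    and "(\<integral>\<^sup>+y. ennreal (g y) \<partial>lborel) = ennreal (integral\<^sup>L lborel g)"
    by (simp_all add: Kf_def Kg_def)
  show "c * integral\<^sup>L lborel f * integral\<^sup>L lborel g = 1"
    using prod_one nonneg unfolding Kf Kg
    by (simp add: ennreal_mult[symmetric] integral_nonneg_AE)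
qed

lemma (in prob_space) indep_distributed_of_product_density:
  fixes U V :: "'a \<Rightarrow> real" and p q :: "real \<Rightarrow> ennreal"
  assumes joint: "distributed M (lborel \<Otimes>\<^sub>M lborel) (\<lambda>\<omega>. (U \<omega>, V \<omega>)) (\<lambda>(x, y). p x * q y)"
    and p_meas [measurable]: "p \<in> borel_measurable borel" and q_meas [measurable]: "q \<in> borel_measurable borel"
    and p_one: "(\<integral>\<^sup>+x. p x \<partial>lborel) = 1" and q_one: "(\<integral>\<^sup>+y. q y \<partial>lborel) = 1"
  shows "indep_var borel U borel V \<and> distributed M lborel U p \<and> distributed M lborel V q"
proof -
  have U: "distributed M lborel U p"
    using distr_marginal1[OF lborel.sigma_finite_measure_axioms lborel.sigma_finite_measure_axioms joint]
    by (simp add: nn_integral_cmult q_one)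
  have V: "distributed M lborel V q"
    using distr_marginal2[OF lborel.sigma_finite_measure_axioms lborel.sigma_finite_measure_axioms joint]
    by (simp add: nn_integral_multc p_one)
  have "sigma_finite_measure (density lborel q)"
    using prob_space_distr[OF distributed_measurable[OF V]]
    by (simp add: distributed_distr_eq_density[OF V] prob_space_imp_sigma_finite)
  then have "density lborel p \<Otimes>\<^sub>M density lborel q = density (lborel \<Otimes>\<^sub>M lborel) (\<lambda>(x, y). p x * q y)"
    by (intro pair_measure_density lborel.sigma_finite_measure_axioms) simp_all
  moreover have "distr M borel U = distr M lborel U" and "distr M borel V = distr M lborel V"
    and "distr M (borel \<Otimes>\<^sub>M borel) (\<lambda>\<omega>. (U \<omega>, V \<omega>))
      = distr M (lborel \<Otimes>\<^sub>M lborel) (\<lambda>\<omega>. (U \<omega>, V \<omega>))"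
    by (intro distr_cong refl sets_pair_measure_cong; simp)+
  ultimately have "distr M borel U \<Otimes>\<^sub>M distr M borel V = distr M (borel \<Otimes>\<^sub>M borel) (\<lambda>\<omega>. (U \<omega>, V \<omega>))"
    by (simp add: distributed_distr_eq_density[OF U] distributed_distr_eq_density[OF V]
        distributed_distr_eq_density[OF joint])
  then have "indep_var borel U borel V"
    using distributed_measurable[OF U] distributed_measurable[OF V]
    by (simp add: indep_var_distribution_eq)
  with U V show ?thesis by simp
qed

lemma (in prob_space) indep_distributed_of_scaled_product_density:
  fixes Z :: "'a \<Rightarrow> real \<times> real" and f g :: "real \<Rightarrow> real"
  assumes joint: "distributed M lborel Z (\<lambda>p. ennreal (c * f (fst p) * g (snd p)))"
    and f_meas [measurable]: "f \<in> borel_measurable borel" and g_meas [measurable]: "g \<in> borel_measurable borel"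
    and nonneg: "c \<ge> 0" "\<And>x. f x \<ge> 0" "\<And>y. g y \<ge> 0"
  shows "indep_var borel (\<lambda>\<omega>. fst (Z \<omega>)) borel (\<lambda>\<omega>. snd (Z \<omega>))
    \<and> distributed M lborel (\<lambda>\<omega>. fst (Z \<omega>)) (\<lambda>x. ennreal (f x / integral\<^sup>L lborel f))
    \<and> distributed M lborel (\<lambda>\<omega>. snd (Z \<omega>)) (\<lambda>y. ennreal (g y / integral\<^sup>L lborel g))"
proof -
  define If Ig where "If = integral\<^sup>L lborel f" and "Ig = integral\<^sup>L lborel g"
  have "(\<integral>\<^sup>+p. ennreal (c * f (fst p) * g (snd p)) \<partial>lborel) = 1"
    using distributed_nn_integral[OF joint, of "\<lambda>_. 1"] by (simp add: emeasure_space_1)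
  note norm = product_density_normalization[OF f_meas g_meas nonneg this, folded If_def Ig_def]
  have "If \<ge> 0" "Ig \<ge> 0"
    using nonneg by (simp_all add: If_def Ig_def integral_nonneg_AE)
  then have If_Ig: "If > 0" "Ig > 0" "c = 1 / (If * Ig)"
    using norm(1) nonneg(1) by (auto simp: field_simps order.order_iff_strict)
  then have "distributed M (lborel \<Otimes>\<^sub>M lborel) (\<lambda>\<omega>. (fst (Z \<omega>), snd (Z \<omega>)))
      (\<lambda>(x, y). ennreal (f x / If) * ennreal (g y / Ig))"
    using joint nonneg
    by (simp add: lborel_prod case_prod_beta' ennreal_mult[symmetric] mult.commute)
  then show ?thesis
    using nn_integral_normalized_density[OF f_meas[folded measurable_lborel2] norm(2) If_Ig(1) nonneg(2)]
      nn_integral_normalized_density[OF g_meas[folded measurable_lborel2] norm(3) If_Ig(2) nonneg(3)]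
    by (intro indep_distributed_of_product_density) (simp_all flip: If_def Ig_def)
qed

theorem theorem1p1:
  fixes M :: "'a measure" and X Y :: "'a \<Rightarrow> real" and \<alpha> \<beta> lam a b :: real
  assumes "prob_space M"
    and "\<alpha> > 0" and "\<beta> > 0" and "a > 0" and "b > 0"
    and "- min a b < lam / 2" and "lam / 2 < min a b"
    and "prob_space.indep_var M borel X borel Y"
    and "distributed M lborel X (\<lambda>x. ennreal (beta_prime_density lam a b \<alpha> 1 x))"
    and "distributed M lborel Y (\<lambda>x. ennreal (beta_prime_density (- lam) a b \<beta> 1 x))"
  shows "prob_space.indep_var M borel (\<lambda>\<omega>. fst (H_I_plus \<alpha> \<beta> (X \<omega>, Y \<omega>)))
                               borel (\<lambda>\<omega>. snd (H_I_plus \<alpha> \<beta> (X \<omega>, Y \<omega>)))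
       \<and> distributed M lborel (\<lambda>\<omega>. fst (H_I_plus \<alpha> \<beta> (X \<omega>, Y \<omega>)))
           (\<lambda>x. ennreal (beta_prime_density (- lam) a b \<alpha> 1 x))
       \<and> distributed M lborel (\<lambda>\<omega>. snd (H_I_plus \<alpha> \<beta> (X \<omega>, Y \<omega>)))
           (\<lambda>x. ennreal (beta_prime_density lam a b \<beta> 1 x))"
proof -
  interpret prob_space M by fact
  define kX kY where "kX = beta_prime_kernel lam a b \<alpha> 1" and "kY = beta_prime_kernel (- lam) a b \<beta> 1"
  define d where "d = 1 / (integral\<^sup>L lborel kX * integral\<^sup>L lborel kY)"
  have d: "d \<ge> 0"
    by (simp add: d_def kX_def kY_def integral_nonneg_AE beta_prime_kernel_nonneg)
  have "distributed M lborel (\<lambda>\<omega>. (X \<omega>, Y \<omega>)) (\<lambda>p. ennreal (d * kX (fst p) * kY (snd p)))"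
    using distributed_pair_of_indep_var[OF assms(8-10) beta_prime_density_nonneg beta_prime_density_nonneg]
    by (simp add: beta_prime_density_def d_def flip: kX_def kY_def)
  then have "distributed M lborel (\<lambda>\<omega>. H_I_plus \<alpha> \<beta> (X \<omega>, Y \<omega>))
      (\<lambda>q. ennreal (d * (\<beta> / \<alpha>) powr lam * beta_prime_kernel (- lam) a b \<alpha> 1 (fst q)
        * beta_prime_kernel lam a b \<beta> 1 (snd q)))"
    using distr_H_I_plus_beta_prime_product[OF assms(2,3) d, of lam a b] unfolding kX_def kY_def
    by (rule distributed_compose_distr_density)
      (simp_all only: measurable_lborel1 measurable_lborel2 H_I_plus_measurable,
        subst borel_prod[symmetric], measurable)
  from indep_distributed_of_scaled_product_density[OF this]
  show ?thesis
    using d by (simp add: beta_prime_density_def beta_prime_kernel_nonneg)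
qed

end
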